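(* Let $w$ satisfy (A1), fix $\delta\in(0,1/2)$, and suppose (A2) holds: $a_\delta(x)\ge \int_0^1 \widetilde w_\delta(x,y)\,dy$ for all $x\in\Omega$. If $\phi\in L^2(\Omega)$ satisfies $\widetilde{\mathcal P}_\delta\phi\ge 0$ a.e. in $\Omega$, then $\phi\ge 0$ a.e. in $\Omega$.
   Context: Throughout, $\Omega=(0,1)$, $\delta\in(0,1/2)$ is the nonlocal horizon, and $\chi_A$ denotes the indicator function of a set $A$. A function $w:[0,\infty)\to[0,\infty)$ satisfies (A1) if $w$ is continuous and nonincreasing on $[0,1)$, positive on $(0,1)$, $w(r)=0$ for $r\ge 1$, and $\int_{\mathbb R} w(|z|)|z|^2\,dz=2$. Set $w_\delta(x,y)=\delta^{-3}w(|x-y|/\delta)$, $a_\delta(x)=\int_0^1 w_\delta(x,y)\,dy$, and $b_\delta(x)=\frac{2}{(x+\delta)^2}\int_{x-\delta}^{0}(x-y)w_\delta(x,y)\,dy$ for $x\in(0,\delta)$, $b_\delta(x)=\frac{2}{(1-x+\delta)^2}\int_{1}^{x+\delta}(y-x)w_\delta(x,y)\,dy$ for $x\in(1-\delta,1)$, and $b_\delta(x)=0$ otherwise. Define $\widetilde w_\delta(x,y)=|w_\delta(x,y)-b_\delta(x)\chi_{(0,\delta)}(|y-x|)|$ and the comparison operator $\widetilde{\mathcal P}_\delta u(x)=a_\delta(x)u(x)-\int_0^1 u(y)\widetilde w_\delta(x,y)\,dy$ on $L^2(\Omega)$. *)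

theory Defs
  imports "HOL-Analysis.Analysis"
begin

definition A1 :: "(real \<Rightarrow> real) \<Rightarrow> bool" where
  "A1 w \<longleftrightarrow>
     (\<forall>r\<ge>0. w r \<ge> 0) \<and>
     continuous_on {0..<1} w \<and>
     (\<forall>r s. 0 \<le> r \<longrightarrow> r \<le> s \<longrightarrow> s < 1 \<longrightarrow> w s \<le> w r) \<and>
     (\<forall>r. 0 < r \<and> r < 1 \<longrightarrow> w r > 0) \<and>
     (\<forall>r\<ge>1. w r = 0) \<and>
     has_bochner_integral lborel (\<lambda>z. w \<bar>z\<bar> * \<bar>z\<bar>^2) 2"

definition w_delta :: "(real \<Rightarrow> real) \<Rightarrow> real \<Rightarrow> real \<Rightarrow> real \<Rightarrow> real" where
  "w_delta w \<delta> x y = w (\<bar>x - y\<bar> / \<delta>) / \<delta>^3"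

definition a_delta :: "(real \<Rightarrow> real) \<Rightarrow> real \<Rightarrow> real \<Rightarrow> real" where
  "a_delta w \<delta> x = set_lebesgue_integral lborel {0..1} (\<lambda>y. w_delta w \<delta> x y)"

definition b_delta :: "(real \<Rightarrow> real) \<Rightarrow> real \<Rightarrow> real \<Rightarrow> real" where
  "b_delta w \<delta> x =
     (if 0 < x \<and> x < \<delta> then
        2 / (x + \<delta>)^2 * set_lebesgue_integral lborel {x - \<delta>..0} (\<lambda>y. (x - y) * w_delta w \<delta> x y)
      else if 1 - \<delta> < x \<and> x < 1 then
        2 / (1 - x + \<delta>)^2 * set_lebesgue_integral lborel {1..x + \<delta>} (\<lambda>y. (y - x) * w_delta w \<delta> x y)
      else 0)"

definition wt_delta :: "(real \<Rightarrow> real) \<Rightarrow> real \<Rightarrow> real \<Rightarrow> real \<Rightarrow> real" where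
  "wt_delta w \<delta> x y =
     \<bar>w_delta w \<delta> x y - b_delta w \<delta> x * indicator {0<..<\<delta>} \<bar>y - x\<bar>\<bar>"

definition Pt_delta :: "(real \<Rightarrow> real) \<Rightarrow> real \<Rightarrow> (real \<Rightarrow> real) \<Rightarrow> real \<Rightarrow> real" where
  "Pt_delta w \<delta> u x =
     a_delta w \<delta> x * u x - set_lebesgue_integral lebesgue {0..1} (\<lambda>y. u y * wt_delta w \<delta> x y)"

definition L2_Omega :: "(real \<Rightarrow> real) \<Rightarrow> bool" where
  "L2_Omega u \<longleftrightarrow> set_borel_measurable lebesgue {0<..<1} u \<and>
     set_integrable lebesgue {0<..<1} (\<lambda>x. (u x)^2)"

end

theory Submission
  imports Defs
begin

text \<open>Let \<open>v\<close> be the negative part of \<open>\<phi>\<close> and \<open>M\<close> its essential supremum, and suppose \<open>M > 0\<close>.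
  The hypothesis says \<open>a v \<le> \<integral> v wt\<close>, so the continuous function
  \<open>Phi = M a - \<integral> v wt = M s + \<integral> (M - v) wt\<close>, with the slack \<open>s = a - \<integral> wt \<ge> 0\<close> of (A2), satisfies
  \<open>0 \<le> Phi \<le> a (M - v)\<close> a.e. and hence has a zero on \<open>[0,1]\<close>. At a zero \<open>x\<close> both terms vanish, so
  \<open>v = M\<close> a.e. wherever \<open>wt(x,\<cdot>) > 0\<close>, and \<open>Phi\<close> vanishes there too: zeros spread along the kernel.
  A zero in \<open>[\<delta>, 1 - \<delta>]\<close> spreads into \<open>(\<delta>/2, \<delta>)\<close>, where \<open>s > 0\<close> somewhere. Otherwise the zero
  closest to the middle lies near the boundary; it spreads further inwards unless the boundary
  correction has cancelled the kernel, which only happens at an endpoint, and from there the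
  zero reaches \<open>\<delta>\<close> or \<open>1 - \<delta>\<close> (or \<open>w\<close> is constant and \<open>s > 0\<close> at the endpoint). Hence
  \<open>M = 0\<close>.\<close>

lemma continuous_on_integral_dominated:
  fixes k :: "real \<Rightarrow> 'a \<Rightarrow> real"
  assumes meas: "\<And>x. x \<in> S \<Longrightarrow> k x \<in> borel_measurable M"
    and G: "integrable M G"
    and bound: "\<And>x y. x \<in> S \<Longrightarrow> y \<in> space M \<Longrightarrow> \<bar>k x y\<bar> \<le> G y"
    and cont: "\<And>x0. x0 \<in> S \<Longrightarrow> AE y in M. continuous (at x0 within S) (\<lambda>x. k x y)"
  shows "continuous_on S (\<lambda>x. integral\<^sup>L M (k x))"
proof (rule continuous_on_sequentiallyI)
  fix u a assume u: "\<forall>n. u n \<in> S" and a: "a \<in> S" and lim: "u \<longlonglongrightarrow> a"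
  show "(\<lambda>n. integral\<^sup>L M (k (u n))) \<longlonglongrightarrow> integral\<^sup>L M (k a)"
  proof (rule integral_dominated_convergence[where w=G])
    show "AE y in M. (\<lambda>i. k (u i) y) \<longlonglongrightarrow> k a y"
      using cont[OF a] proof eventually_elim
      case (elim y)
      then show ?case using u lim unfolding continuous_within_sequentially by (auto simp: o_def)
    qed
  qed (use meas a u G bound in auto)
qed

lemma continuous_within_eventually_const:
  "eventually (\<lambda>x. f x = f x0) (at x0 within S) \<Longrightarrow> continuous (at x0 within S) f"
  by (simp add: continuous_within tendsto_eventually)

lemma continuous_indicator_Icc_moving_lower:
  fixes d c y x0 :: real assumes "y \<noteq> x0 + d"
  shows "continuous (at x0 within S) (\<lambda>x. indicator {x+d..c} y :: real)"
proof (rule continuous_within_eventually_const)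
  show "\<forall>\<^sub>F x in at x0 within S. indicator {x+d..c} y = (indicator {x0+d..c} y :: real)"
    unfolding eventually_at
    by (rule exI[of _ "\<bar>y - (x0 + d)\<bar>"]) (use assms in \<open>auto simp: indicator_def dist_real_def\<close>)
qed

lemma continuous_indicator_Icc_moving_upper:
  fixes d c y x0 :: real assumes "y \<noteq> x0 + d"
  shows "continuous (at x0 within S) (\<lambda>x. indicator {c..x+d} y :: real)"
proof (rule continuous_within_eventually_const)
  show "\<forall>\<^sub>F x in at x0 within S. indicator {c..x+d} y = (indicator {c..x0+d} y :: real)"
    unfolding eventually_at
    by (rule exI[of _ "\<bar>y - (x0 + d)\<bar>"]) (use assms in \<open>auto simp: indicator_def dist_real_def\<close>)
qed

lemma continuous_indicator_punctured_ball:
  fixes y x0 d :: real assumes "y \<noteq> x0" "\<bar>y - x0\<bar> \<noteq> d"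
  shows "continuous (at x0 within S) (\<lambda>x. indicator {0<..<d} \<bar>y - x\<bar> :: real)"
proof (rule continuous_within_eventually_const)
  define e where "e = min \<bar>y - x0\<bar> \<bar>\<bar>y - x0\<bar> - d\<bar>"
  have e: "e > 0" using assms unfolding e_def by auto
  have same_side: "(\<bar>y - x\<bar> \<in> {0<..<d}) = (\<bar>y - x0\<bar> \<in> {0<..<d})" if "\<bar>x - x0\<bar> < e" for x
  proof -
    have "\<bar>y - x\<bar> \<le> \<bar>y - x0\<bar> + \<bar>x - x0\<bar>" "\<bar>y - x0\<bar> \<le> \<bar>y - x\<bar> + \<bar>x - x0\<bar>" by arith+
    moreover have "e \<le> \<bar>y - x0\<bar>" "e \<le> \<bar>\<bar>y - x0\<bar> - d\<bar>" unfolding e_def by auto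
    ultimately show ?thesis using that assms by (cases "\<bar>y - x0\<bar> < d") auto
  qed
  show "\<forall>\<^sub>F x in at x0 within S. indicator {0<..<d} \<bar>y - x\<bar> = (indicator {0<..<d} \<bar>y - x0\<bar> :: real)"
    unfolding eventually_at
  proof (intro exI[of _ e] conjI ballI impI allI e)
    fix x assume "x \<noteq> x0 \<and> dist x x0 < e"
    then show "indicator {0<..<d} \<bar>y - x\<bar> = (indicator {0<..<d} \<bar>y - x0\<bar> :: real)"
      using same_side[of x] by (simp add: dist_real_def indicator_def)
  qed
qed

lemma set_integral_Icc_linear:
  fixes a b c k :: real assumes "a \<le> b"
  shows "(LINT y:{a..b}|lborel. k * (y - c)) = k * ((b - c)^2 - (a - c)^2) / 2"
proof -
  have "(LINT y:{a..b}|lborel. k * (y - c)) = integral\<^sup>L lborel (\<lambda>y. indicator {a..b} y *\<^sub>R (k * (y - c)))"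
    by (simp only: set_lebesgue_integral_def)
  also have "\<dots> = k * (b - c)^2 / 2 - k * (a - c)^2 / 2"
  proof (rule integral_FTC_atLeastAtMost[OF assms, where F="\<lambda>y. k * (y - c)^2 / 2"])
    fix x
    have "((\<lambda>y. k * (y - c)^2 / 2) has_real_derivative (k * (x - c))) (at x)"
      by (auto intro!: derivative_eq_intros)
    then show "((\<lambda>y. k * (y - c)^2 / 2) has_vector_derivative (k * (x - c))) (at x within {a..b})"
      by (simp add: has_real_derivative_iff_has_vector_derivative has_vector_derivative_at_within)
  qed (intro continuous_intros)
  finally show ?thesis by (simp add: algebra_simps)
qed

lemma set_integral_Icc_degenerate:
  fixes a b :: real assumes "b \<le> a"
  shows "(LINT y:{a..b}|lborel. (f y::real)) = 0"
proof -
  have "AE y in lborel. indicator {a..b} y *\<^sub>R f y = 0"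
    using AE_lborel_singleton[of a] by eventually_elim (use assms in \<open>auto simp: indicator_def\<close>)
  then show ?thesis unfolding set_lebesgue_integral_def by (rule integral_eq_zero_AE)
qed

lemma AE_lborel_avoid3: "AE y in lborel. y \<noteq> (a::real) \<and> y \<noteq> b \<and> y \<noteq> c"
  using AE_lborel_singleton[of a] AE_lborel_singleton[of b] AE_lborel_singleton[of c]
  by eventually_elim auto

lemma AE_lebesgue_ex_in_interval:
  fixes a b :: real assumes "a < b" and P: "AE x in lebesgue. P x"
  shows "\<exists>x. a < x \<and> x < b \<and> P x"
proof (rule ccontr)
  assume "\<not> ?thesis"
  then have sub: "{a<..<b} \<subseteq> {x. \<not> P x}" by auto
  from P have "AE x in lborel. P x" by (simp add: AE_completion_iff)
  then obtain N where N: "{x \<in> space lborel. \<not> P x} \<subseteq> N" "emeasure lborel N = 0" "N \<in> sets lborel"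
    by (rule AE_E)
  then have "emeasure lborel {a<..<b} \<le> emeasure lborel N"
    using sub by (intro emeasure_mono) auto
  then show False using N \<open>a < b\<close> by simp
qed

lemma continuous_on_Icc_greatest_zero:
  fixes f :: "real \<Rightarrow> real"
  assumes "continuous_on {p..q} f" "x \<in> {p..q}" "f x = 0"
  shows "\<exists>z\<in>{p..q}. f z = 0 \<and> (\<forall>y\<in>{p..q}. f y = 0 \<longrightarrow> y \<le> z)"
proof -
  have "closed {y \<in> {p..q}. f y = 0}"
    using assms(1) by (rule continuous_closed_preimage_constant) simp
  moreover have "bounded {y \<in> {p..q}. f y = 0}" by (rule bounded_subset[of "{p..q}"]) auto
  ultimately have cpt: "compact {y \<in> {p..q}. f y = 0}" by (simp add: compact_eq_bounded_closed)
  have "{y \<in> {p..q}. f y = 0} \<noteq> {}" using assms(2,3) by auto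
  from continuous_attains_sup[OF cpt this continuous_on_id]
  show ?thesis by auto
qed

lemma continuous_on_Icc_least_zero:
  fixes f :: "real \<Rightarrow> real"
  assumes "continuous_on {p..q} f" "x \<in> {p..q}" "f x = 0"
  shows "\<exists>z\<in>{p..q}. f z = 0 \<and> (\<forall>y\<in>{p..q}. f y = 0 \<longrightarrow> z \<le> y)"
proof -
  have "closed {y \<in> {p..q}. f y = 0}"
    using assms(1) by (rule continuous_closed_preimage_constant) simp
  moreover have "bounded {y \<in> {p..q}. f y = 0}" by (rule bounded_subset[of "{p..q}"]) auto
  ultimately have cpt: "compact {y \<in> {p..q}. f y = 0}" by (simp add: compact_eq_bounded_closed)
  have "{y \<in> {p..q}. f y = 0} \<noteq> {}" using assms(2,3) by auto
  from continuous_attains_inf[OF cpt this continuous_on_id]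
  show ?thesis by auto
qed

lemma integrable_lebesgue_of_lborel:
  fixes f :: "real \<Rightarrow> real" shows "integrable lborel f \<Longrightarrow> integrable lebesgue f"
  using integrable_completion[of f lborel] borel_measurable_integrable[of lborel f] by blast

lemma integral_lebesgue_eq_lborel:
  fixes f :: "real \<Rightarrow> real" assumes "f \<in> borel_measurable borel"
  shows "integral\<^sup>L lebesgue f = integral\<^sup>L lborel f"
  by (rule integral_completion) (use assms in \<open>simp add: measurable_lborel1\<close>)

lemma integrable_indicator_mult_bounded:
  fixes f :: "'a \<Rightarrow> real"
  assumes "A \<in> sets M" "emeasure M A < \<infinity>" "f \<in> borel_measurable M" "\<And>y. \<bar>f y\<bar> \<le> B"
  shows "integrable M (\<lambda>y. indicator A y * f y)"
proof (rule Bochner_Integration.integrable_bound[where f="\<lambda>y. indicator A y * B"])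
  show "integrable M (\<lambda>y. indicator A y * B)"
    using assms(1,2) by simp
  show "AE x in M. norm (indicator A x * f x) \<le> norm (indicator A x * B)"
    using assms(4) by (auto simp: indicator_def intro: order_trans[OF _ abs_ge_self])
qed (use assms in measurable)

lemma integrable_Icc_mult_bounded:
  fixes f :: "real \<Rightarrow> real"
  assumes "f \<in> borel_measurable lebesgue" "\<And>y. \<bar>f y\<bar> \<le> B"
  shows "integrable lebesgue (\<lambda>y. indicator {a..b} y * f y)"
  by (rule integrable_indicator_mult_bounded) (use assms in \<open>auto simp: emeasure_lborel_Icc_eq\<close>)

lemma integrable_Icc_mult_bounded_lborel:
  fixes f :: "real \<Rightarrow> real"
  assumes "f \<in> borel_measurable borel" "\<And>y. \<bar>f y\<bar> \<le> B"
  shows "integrable lborel (\<lambda>y. indicator {a..b} y * f y)"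
  by (rule integrable_indicator_mult_bounded)
    (use assms in \<open>auto simp: measurable_lborel1 emeasure_lborel_Icc_eq ennreal_less_top\<close>)

lemma integrable_mult_bounded:
  fixes g h :: "'a \<Rightarrow> real"
  assumes "integrable M g" "h \<in> borel_measurable M" "\<And>y. \<bar>h y\<bar> \<le> B"
  shows "integrable M (\<lambda>y. g y * h y)"
proof (rule Bochner_Integration.integrable_bound[where f="\<lambda>y. B * g y"])
  have "0 \<le> B" using assms(3) abs_ge_zero order_trans by blast
  then show "AE y in M. norm (g y * h y) \<le> norm (B * g y)"
    using assms(3) by (intro AE_I2) (simp add: abs_mult mult.commute[of B] mult_left_mono)
qed (use assms in auto)

lemma cancel_square_factor: "a \<noteq> 0 \<Longrightarrow> 2/a^2 * (k * (a * b) / 2) = k * b / (a::real)"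
  by (simp add: power2_eq_square field_simps)

lemma continuous_on_kernel_integral:
  fixes g :: "real \<Rightarrow> real" and K :: "real \<Rightarrow> real \<Rightarrow> real"
  assumes g: "g \<in> borel_measurable lebesgue" "\<And>y. \<bar>g y\<bar> \<le> B"
    and K_meas: "\<And>x. (\<lambda>y. K x y) \<in> borel_measurable borel"
    and K_bound: "\<And>x y. x \<in> {a..b} \<Longrightarrow> \<bar>K x y\<bar> \<le> C"
    and K_cont: "\<And>x0 y. y \<noteq> x0 \<Longrightarrow> y \<noteq> x0 - d \<Longrightarrow> y \<noteq> x0 + d \<Longrightarrow>
                   continuous (at x0 within {a..b}) (\<lambda>x. K x y)"
  shows "continuous_on {a..b} (\<lambda>x. LINT y:{a..b}|lebesgue. g y * K x y)"
  unfolding set_lebesgue_integral_def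
proof (rule continuous_on_integral_dominated[where G="\<lambda>y. indicator {a..b} y * (B * C)"])
  show "integrable lebesgue (\<lambda>y::real. indicator {a..b} y * (B * C))"
    by (rule integrable_Icc_mult_bounded) auto
  fix x :: real
  have "(\<lambda>y. K x y) \<in> borel_measurable lebesgue"
    by (rule measurable_completion) (use K_meas[of x] in \<open>simp add: measurable_lborel1\<close>)
  then show "(\<lambda>y. indicator {a..b} y *\<^sub>R (g y * K x y)) \<in> borel_measurable lebesgue"
    by (intro borel_measurable_scaleR borel_measurable_indicator borel_measurable_times g(1)) auto
  assume x: "x \<in> {a..b}"
  show "\<bar>indicator {a..b} y *\<^sub>R (g y * K x y)\<bar> \<le> indicator {a..b} y * (B * C)" for y
    using g(2)[of y] K_bound[OF x, of y]
    by (auto simp: indicator_def abs_mult intro!: mult_mono)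
next
  fix x0 :: real
  have "AE y in lebesgue. y \<noteq> x0 \<and> y \<noteq> x0 - d \<and> y \<noteq> x0 + d"
    using AE_lborel_avoid3 by (rule AE_completion)
  then show "AE y in lebesgue. continuous (at x0 within {a..b}) (\<lambda>x. indicator {a..b} y *\<^sub>R (g y * K x y))"
    by eventually_elim (auto intro!: continuous_intros K_cont)
qed


locale nonlocal_kernel =
  fixes w :: "real \<Rightarrow> real" and \<delta> :: real
  assumes A1: "A1 w" and delta_pos: "0 < \<delta>" and delta_lt: "\<delta> < 1/2"
begin

lemma w_nonneg: "r \<ge> 0 \<Longrightarrow> w r \<ge> 0" using A1 unfolding A1_def by auto
lemma w_antimono: "0 \<le> r \<Longrightarrow> r \<le> s \<Longrightarrow> s < 1 \<Longrightarrow> w s \<le> w r" using A1 unfolding A1_def by auto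
lemma w_pos: "0 < r \<Longrightarrow> r < 1 \<Longrightarrow> w r > 0" using A1 unfolding A1_def by auto
lemma w_vanishes: "r \<ge> 1 \<Longrightarrow> w r = 0" using A1 unfolding A1_def by auto
lemma continuous_on_w: "continuous_on {0..<1} w" using A1 unfolding A1_def by auto

lemma w_le_w0: "r \<ge> 0 \<Longrightarrow> w r \<le> w 0"
  using w_antimono[of 0 r] w_vanishes[of r] w_nonneg[of 0] by (cases "r < 1") auto

lemma w0_pos: "w 0 > 0"
  using w_pos[of "1/2"] w_le_w0[of "1/2"] by auto

lemma continuous_w: assumes "r \<ge> 0" "r \<noteq> 1" shows "continuous (at r within {0..}) w"
proof (cases "r < 1")
  case True
  have "continuous (at r within {0..<1}) w"
    using continuous_on_w True assms by (simp add: continuous_on_eq_continuous_within)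
  moreover have "at r within {0..} = at r within {0..<1}"
    by (rule at_within_nhd[where S="{..<1}"]) (use True in auto)
  ultimately show ?thesis by simp
next
  case False
  then have "\<forall>\<^sub>F x in at r within {0..}. w x = w r"
    unfolding eventually_at_topological using assms w_vanishes
    by (intro exI[of _ "{1<..}"]) auto
  then show ?thesis by (rule continuous_within_eventually_const)
qed

definition kern :: "real \<Rightarrow> real" where "kern r = w (r/\<delta>) / \<delta>^3"

lemma w_delta_eq_kern: "w_delta w \<delta> x y = kern \<bar>x - y\<bar>" unfolding w_delta_def kern_def ..

lemma kern_nonneg: "r \<ge> 0 \<Longrightarrow> kern r \<ge> 0" unfolding kern_def using delta_pos w_nonneg by auto
lemma kern_vanishes: "r \<ge> \<delta> \<Longrightarrow> kern r = 0" unfolding kern_def using delta_pos w_vanishes by auto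
lemma kern_pos: "0 \<le> r \<Longrightarrow> r < \<delta> \<Longrightarrow> kern r > 0"
  unfolding kern_def using delta_pos w_pos w0_pos by (cases "r = 0") auto

lemma kern_antimono: assumes "0 \<le> r" "r \<le> s" shows "kern s \<le> kern r"
proof (cases "s < \<delta>")
  case True
  then show ?thesis unfolding kern_def using assms delta_pos w_antimono[of "r/\<delta>" "s/\<delta>"]
    by (simp add: divide_right_mono field_simps)
next
  case False
  then show ?thesis using assms kern_vanishes[of s] kern_nonneg[of r] by auto
qed

lemma kern_le_kern0: "r \<ge> 0 \<Longrightarrow> kern r \<le> kern 0" using kern_antimono by simp
lemma kern0_pos: "kern 0 > 0" using kern_pos delta_pos by simp
lemma kern_half_pos: "kern (\<delta>/2) > 0" using kern_pos delta_pos by simp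

lemma w_delta_nonneg: "0 \<le> w_delta w \<delta> x y" using kern_nonneg w_delta_eq_kern by simp
lemma w_delta_le: "w_delta w \<delta> x y \<le> kern 0" using kern_le_kern0 w_delta_eq_kern by simp

lemma w_delta_measurable[measurable]: "(\<lambda>y. w_delta w \<delta> x y) \<in> borel_measurable borel"
proof -
  have "(\<lambda>r. indicator {0..<1} r * w r) \<in> borel_measurable borel"
    using borel_measurable_continuous_on_indicator[of "{0..<1}" w] continuous_on_w by simp
  then have "(\<lambda>y. (\<lambda>r. indicator {0..<1} r * w r) (\<bar>x-y\<bar>/\<delta>) / \<delta>^3) \<in> borel_measurable borel"
    by measurable
  moreover have "w_delta w \<delta> x y = indicator {0..<1} (\<bar>x-y\<bar>/\<delta>) * w (\<bar>x-y\<bar>/\<delta>) / \<delta>^3" for y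
    using w_vanishes delta_pos by (auto simp: w_delta_def indicator_def not_less)
  ultimately show ?thesis by simp
qed

lemma continuous_w_delta: assumes "\<bar>x0 - y\<bar> \<noteq> \<delta>"
  shows "continuous (at x0 within S) (\<lambda>x. w_delta w \<delta> x y)"
proof -
  let ?g = "\<lambda>x. \<bar>x-y\<bar>/\<delta>"
  have "continuous (at (?g x0) within {0..}) w" using assms continuous_w delta_pos by auto
  then have "continuous (at (?g x0) within ?g ` S) w"
    by (rule continuous_within_subset) (use delta_pos in auto)
  then have "continuous (at x0 within S) (w \<circ> ?g)"
    by (intro continuous_within_compose) (use delta_pos in \<open>auto intro!: continuous_intros\<close>)
  then show ?thesis unfolding w_delta_def o_def by (intro continuous_intros) (use delta_pos in auto)
qed

definition moment_left :: "real \<Rightarrow> real" where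
  "moment_left x = (LINT y:{x-\<delta>..0}|lborel. (x - y) * w_delta w \<delta> x y)"

definition moment_right :: "real \<Rightarrow> real" where
  "moment_right x = (LINT y:{1..x+\<delta>}|lborel. (y - x) * w_delta w \<delta> x y)"

text \<open>Agrees with \<open>b_delta\<close> on \<open>(0,1)\<close>, but is continuous on \<open>[0,1]\<close>: the else-branch of
  \<open>b_delta\<close> sets it to 0 at the endpoints.\<close>
definition bcont :: "real \<Rightarrow> real" where
  "bcont x = 2/(x+\<delta>)^2 * moment_left x + 2/(1-x+\<delta>)^2 * moment_right x"

lemma moment_left_vanishes: "x \<ge> \<delta> \<Longrightarrow> moment_left x = 0"
  unfolding moment_left_def by (rule set_integral_Icc_degenerate) simp

lemma moment_right_vanishes: "x \<le> 1 - \<delta> \<Longrightarrow> moment_right x = 0"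
  unfolding moment_right_def by (rule set_integral_Icc_degenerate) simp

lemma b_delta_eq_bcont: assumes "0 < x" "x < 1" shows "b_delta w \<delta> x = bcont x"
  using assms delta_lt delta_pos moment_left_vanishes[of x] moment_right_vanishes[of x]
  unfolding b_delta_def bcont_def moment_left_def moment_right_def by auto

lemma bcont_middle: "\<delta> \<le> x \<Longrightarrow> x \<le> 1 - \<delta> \<Longrightarrow> bcont x = 0"
  using moment_left_vanishes moment_right_vanishes unfolding bcont_def by auto

lemma bcont_left: "x < 1 - \<delta> \<Longrightarrow> bcont x = 2/(x+\<delta>)^2 * moment_left x"
  using moment_right_vanishes unfolding bcont_def by auto

lemma bcont_right: "\<delta> < x \<Longrightarrow> bcont x = 2/(1-x+\<delta>)^2 * moment_right x"
  using moment_left_vanishes unfolding bcont_def by auto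

lemma moment_left_nonneg: "0 \<le> x \<Longrightarrow> 0 \<le> moment_left x"
  unfolding moment_left_def set_lebesgue_integral_def
  by (rule Bochner_Integration.integral_nonneg) (auto simp: indicator_def intro!: mult_nonneg_nonneg w_delta_nonneg)

lemma moment_right_nonneg: "x \<le> 1 \<Longrightarrow> 0 \<le> moment_right x"
  unfolding moment_right_def set_lebesgue_integral_def
  by (rule Bochner_Integration.integral_nonneg) (auto simp: indicator_def intro!: mult_nonneg_nonneg w_delta_nonneg)

lemma bcont_nonneg: "0 \<le> x \<Longrightarrow> x \<le> 1 \<Longrightarrow> 0 \<le> bcont x"
  unfolding bcont_def using moment_left_nonneg moment_right_nonneg by auto

lemma moment_left_le: assumes "0 \<le> x" "x \<le> \<delta>" shows "moment_left x \<le> kern 0 * ((\<delta> + x) * (\<delta> - x)) / 2"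
proof -
  have "moment_left x \<le> (LINT y:{x-\<delta>..0}|lborel. - kern 0 * (y - x))"
    unfolding moment_left_def set_lebesgue_integral_def
  proof (rule integral_mono')
    show "integrable lborel (\<lambda>y. indicator {x-\<delta>..0} y *\<^sub>R (- kern 0 * (y - x)))"
      by (intro borel_integrable_atLeastAtMost'[unfolded set_integrable_def] continuous_intros)
    fix y
    show "indicator {x-\<delta>..0} y *\<^sub>R ((x - y) * w_delta w \<delta> x y) \<le> indicator {x-\<delta>..0} y *\<^sub>R (- kern 0 * (y - x))"
      using mult_left_mono[OF w_delta_le[of x y], of "x - y"] assms by (auto simp: indicator_def algebra_simps)
    show "0 \<le> indicator {x-\<delta>..0} y *\<^sub>R (- kern 0 * (y - x))"
      using kern0_pos assms by (auto simp: indicator_def intro!: mult_nonneg_nonpos)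
  qed
  also have "\<dots> = kern 0 * ((\<delta> + x) * (\<delta> - x)) / 2"
    using assms by (subst set_integral_Icc_linear) (auto simp: power2_eq_square field_simps)
  finally show ?thesis .
qed

lemma moment_right_le: assumes "1 - \<delta> \<le> x" "x \<le> 1"
  shows "moment_right x \<le> kern 0 * ((\<delta> + (1 - x)) * (\<delta> - (1 - x))) / 2"
proof -
  have "moment_right x \<le> (LINT y:{1..x+\<delta>}|lborel. kern 0 * (y - x))"
    unfolding moment_right_def set_lebesgue_integral_def
  proof (rule integral_mono')
    show "integrable lborel (\<lambda>y. indicator {1..x+\<delta>} y *\<^sub>R (kern 0 * (y - x)))"
      by (intro borel_integrable_atLeastAtMost'[unfolded set_integrable_def] continuous_intros)
    fix y
    show "indicator {1..x+\<delta>} y *\<^sub>R ((y - x) * w_delta w \<delta> x y) \<le> indicator {1..x+\<delta>} y *\<^sub>R (kern 0 * (y - x))"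
      using mult_left_mono[OF w_delta_le[of x y], of "y - x"] assms by (auto simp: indicator_def algebra_simps)
    show "0 \<le> indicator {1..x+\<delta>} y *\<^sub>R (kern 0 * (y - x))"
      using kern0_pos assms by (auto simp: indicator_def intro!: mult_nonneg_nonneg)
  qed
  also have "\<dots> = kern 0 * ((\<delta> + (1 - x)) * (\<delta> - (1 - x))) / 2"
    using assms by (subst set_integral_Icc_linear) (auto simp: power2_eq_square field_simps)
  finally show ?thesis .
qed

lemma bcont_le_left: assumes "0 \<le> x" "x \<le> \<delta>" shows "bcont x \<le> kern 0 * (\<delta> - x) / (\<delta> + x)"
proof -
  have pos: "\<delta> + x \<noteq> 0" using assms delta_pos by simp
  have "bcont x = 2/(\<delta>+x)^2 * moment_left x" using bcont_left assms delta_lt by (auto simp: add.commute)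
  also have "\<dots> \<le> 2/(\<delta>+x)^2 * (kern 0 * ((\<delta> + x) * (\<delta> - x)) / 2)"
    using moment_left_le[OF assms] by (intro mult_left_mono) auto
  also have "\<dots> = kern 0 * (\<delta> - x) / (\<delta> + x)"
    by (rule cancel_square_factor[OF pos])
  finally show ?thesis .
qed

lemma bcont_le_right: assumes "1 - \<delta> \<le> x" "x \<le> 1"
  shows "bcont x \<le> kern 0 * (\<delta> - (1 - x)) / (\<delta> + (1 - x))"
proof -
  have pos: "\<delta> + (1 - x) \<noteq> 0" using assms delta_pos by simp
  have "bcont x = 2/(\<delta>+(1-x))^2 * moment_right x" using bcont_right assms delta_lt by (auto simp: add.commute)
  also have "\<dots> \<le> 2/(\<delta>+(1-x))^2 * (kern 0 * ((\<delta> + (1 - x)) * (\<delta> - (1 - x))) / 2)"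
    using moment_right_le[OF assms] by (intro mult_left_mono) auto
  also have "\<dots> = kern 0 * (\<delta> - (1 - x)) / (\<delta> + (1 - x))"
    by (rule cancel_square_factor[OF pos])
  finally show ?thesis .
qed

lemma bcont_le_kern0: assumes "0 \<le> x" "x \<le> 1" shows "bcont x \<le> kern 0"
proof -
  consider "x \<le> \<delta>" | "1 - \<delta> \<le> x" | "\<delta> \<le> x" "x \<le> 1 - \<delta>" by linarith
  then show ?thesis
  proof cases
    case 1
    have "kern 0 * (\<delta> - x) / (\<delta> + x) \<le> kern 0" using assms 1 delta_pos kern0_pos by (simp add: field_simps)
    then show ?thesis using bcont_le_left[OF assms(1) 1] by linarith
  next
    case 2
    have "kern 0 * (\<delta> - (1 - x)) / (\<delta> + (1 - x)) \<le> kern 0"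
      using assms 2 delta_pos kern0_pos by (simp add: field_simps)
    then show ?thesis using bcont_le_right[OF 2 assms(2)] by linarith
  qed (use bcont_middle kern0_pos in auto)
qed

lemma bcont_less_kern0: assumes "0 < x" "x < 1" shows "bcont x < kern 0"
proof -
  consider "x \<le> \<delta>" | "1 - \<delta> \<le> x" | "\<delta> \<le> x" "x \<le> 1 - \<delta>" by linarith
  then show ?thesis
  proof cases
    case 1
    have "kern 0 * (\<delta> - x) / (\<delta> + x) < kern 0" using assms 1 delta_pos kern0_pos by (simp add: field_simps)
    then show ?thesis using bcont_le_left[OF _ 1] assms by linarith
  next
    case 2
    have "kern 0 * (\<delta> - (1 - x)) / (\<delta> + (1 - x)) < kern 0"
      using assms 2 delta_pos kern0_pos by (simp add: field_simps)
    then show ?thesis using bcont_le_right[OF 2] assms by linarith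
  qed (use bcont_middle kern0_pos in auto)
qed

lemma moment_left_pos: assumes x: "0 < x" "x < \<delta>" shows "moment_left x > 0"
proof -
  define z0 where "z0 = (x + \<delta>)/2"
  have z0: "x < z0" "z0 < \<delta>" unfolding z0_def using x by auto
  have kz0: "kern z0 > 0" using z0 x by (intro kern_pos) auto
  have "0 < x * kern z0 * (z0 - x)" using x z0 kz0 by simp
  also have "\<dots> = integral\<^sup>L lborel (\<lambda>y::real. indicator {x - z0..0} y * (x * kern z0))"
    using z0 x by simp
  also have "\<dots> \<le> integral\<^sup>L lborel (\<lambda>y. indicator {x-\<delta>..0} y * ((x - y) * w_delta w \<delta> x y))"
  proof (rule integral_mono')
    show "integrable lborel (\<lambda>y. indicator {x-\<delta>..0} y * ((x - y) * w_delta w \<delta> x y))"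
    proof (rule integrable_Icc_mult_bounded_lborel[where B="\<delta> * kern 0"])
      show "\<bar>(x - y) * w_delta w \<delta> x y\<bar> \<le> \<delta> * kern 0" for y
        using kern_vanishes[of "\<bar>x - y\<bar>"] w_delta_nonneg[of x y] w_delta_le[of x y] delta_pos kern0_pos
        by (cases "\<bar>x - y\<bar> < \<delta>") (auto simp: abs_mult w_delta_eq_kern intro!: mult_mono)
    qed measurable
    fix y
    show "indicator {x - z0..0} y * (x * kern z0) \<le> indicator {x-\<delta>..0} y * ((x - y) * w_delta w \<delta> x y)"
    proof (cases "y \<in> {x - z0..0}")
      case True
      then have "kern z0 \<le> kern (x - y)" using x z0 by (intro kern_antimono) auto
      then show ?thesis using True x z0 kz0 by (auto simp: indicator_def w_delta_eq_kern intro!: mult_mono)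
    qed (use x in \<open>auto simp: indicator_def intro!: mult_nonneg_nonneg w_delta_nonneg\<close>)
  qed (use x in \<open>auto simp: indicator_def intro!: mult_nonneg_nonneg w_delta_nonneg\<close>)
  also have "\<dots> = moment_left x" unfolding moment_left_def set_lebesgue_integral_def by simp
  finally show ?thesis .
qed

lemma continuous_on_moment_left: "continuous_on {0..1} moment_left"
  unfolding moment_left_def set_lebesgue_integral_def
proof (rule continuous_on_integral_dominated[where G="\<lambda>y. indicator {-\<delta>..0} y * ((1+\<delta>) * kern 0)"])
  fix x assume x: "x \<in> {0..1::real}"
  show "\<bar>indicator {x-\<delta>..0} y *\<^sub>R ((x - y) * w_delta w \<delta> x y)\<bar> \<le> indicator {-\<delta>..0} y * ((1+\<delta>) * kern 0)" for y
    using x w_delta_nonneg[of x y] w_delta_le[of x y] delta_pos kern0_pos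
    by (auto simp: indicator_def abs_mult intro!: mult_mono)
next
  fix x0 :: real
  show "AE y in lborel. continuous (at x0 within {0..1})
          (\<lambda>x. indicator {x-\<delta>..0} y *\<^sub>R ((x - y) * w_delta w \<delta> x y))"
    using AE_lborel_avoid3[of "x0 - \<delta>" "x0 + \<delta>" 0]
  proof eventually_elim
    case (elim y)
    then have "continuous (at x0 within {0..1}) (\<lambda>x. indicator {x+(-\<delta>)..0} y * ((x - y) * w_delta w \<delta> x y))"
      by (intro continuous_intros continuous_indicator_Icc_moving_lower continuous_w_delta) auto
    then show ?case by simp
  qed
qed (auto intro!: borel_integrable_atLeastAtMost'[of _ _ "\<lambda>_. (1+\<delta>) * kern 0",
                   unfolded set_integrable_def, simplified])

lemma continuous_on_moment_right: "continuous_on {0..1} moment_right"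
  unfolding moment_right_def set_lebesgue_integral_def
proof (rule continuous_on_integral_dominated[where G="\<lambda>y. indicator {1..1+\<delta>} y * ((1+\<delta>) * kern 0)"])
  fix x assume x: "x \<in> {0..1::real}"
  show "\<bar>indicator {1..x+\<delta>} y *\<^sub>R ((y - x) * w_delta w \<delta> x y)\<bar> \<le> indicator {1..1+\<delta>} y * ((1+\<delta>) * kern 0)" for y
    using x w_delta_nonneg[of x y] w_delta_le[of x y] delta_pos kern0_pos
    by (auto simp: indicator_def abs_mult intro!: mult_mono)
next
  fix x0 :: real
  show "AE y in lborel. continuous (at x0 within {0..1})
          (\<lambda>x. indicator {1..x+\<delta>} y *\<^sub>R ((y - x) * w_delta w \<delta> x y))"
    using AE_lborel_avoid3[of "x0 - \<delta>" "x0 + \<delta>" 0]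
  proof eventually_elim
    case (elim y)
    then show ?case
      by (auto intro!: continuous_intros continuous_indicator_Icc_moving_upper continuous_w_delta)
  qed
qed (auto intro!: borel_integrable_atLeastAtMost'[of _ _ "\<lambda>_. (1+\<delta>) * kern 0",
                   unfolded set_integrable_def, simplified])

lemma continuous_on_bcont: "continuous_on {0..1} bcont"
  unfolding bcont_def using delta_pos
  by (intro continuous_intros continuous_on_moment_left continuous_on_moment_right) auto

text \<open>\<open>wt_delta\<close> with \<open>bcont\<close> in place of \<open>b_delta\<close>, so that it depends continuously on
  \<open>x \<in> [0,1]\<close>.\<close>
definition wtc :: "real \<Rightarrow> real \<Rightarrow> real" where
  "wtc x y = \<bar>w_delta w \<delta> x y - bcont x * indicator {0<..<\<delta>} \<bar>y - x\<bar>\<bar>"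

lemma wt_delta_eq_wtc: "0 < x \<Longrightarrow> x < 1 \<Longrightarrow> wt_delta w \<delta> x y = wtc x y"
  unfolding wt_delta_def wtc_def using b_delta_eq_bcont by simp

lemma wtc_nonneg: "0 \<le> wtc x y" unfolding wtc_def by simp

lemma wtc_le: assumes "0 \<le> x" "x \<le> 1" shows "wtc x y \<le> kern 0"
proof -
  have "0 \<le> bcont x * indicator {0<..<\<delta>} \<bar>y - x\<bar>" "bcont x * indicator {0<..<\<delta>} \<bar>y - x\<bar> \<le> kern 0"
    using bcont_nonneg[OF assms] bcont_le_kern0[OF assms] kern0_pos by (auto simp: indicator_def)
  then show ?thesis using w_delta_nonneg[of x y] w_delta_le[of x y] unfolding wtc_def by auto
qed

lemma wtc_measurable[measurable]: "(\<lambda>y. wtc x y) \<in> borel_measurable borel"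
  unfolding wtc_def by measurable

lemma wtc_measurable_lebesgue[measurable]: "(\<lambda>y. wtc x y) \<in> borel_measurable lebesgue"
  by (rule measurable_completion) (simp add: measurable_lborel1)

lemma continuous_wtc: assumes "y \<noteq> x0" "y \<noteq> x0 - \<delta>" "y \<noteq> x0 + \<delta>"
  shows "continuous (at x0 within {0..1}) (\<lambda>x. wtc x y)"
proof -
  have "continuous (at x0 within {0..1}) bcont"
  proof (cases "x0 \<in> {0..1}")
    case True
    then show ?thesis using continuous_on_bcont by (simp add: continuous_on_eq_continuous_within)
  qed (simp add: continuous_within not_in_closure_trivial_limitI)
  then show ?thesis unfolding wtc_def using assms
    by (intro continuous_intros continuous_w_delta continuous_indicator_punctured_ball) auto
qed

lemma wtc_pos_middle: assumes "\<delta> \<le> x" "x \<le> 1 - \<delta>" "\<bar>y - x\<bar> < \<delta>" shows "wtc x y > 0"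
  using assms bcont_middle[of x] kern_pos[of "\<bar>x - y\<bar>"]
  by (simp add: wtc_def w_delta_eq_kern abs_minus_commute)

lemma kern_gt_near_0: assumes "b < kern 0" shows "\<exists>\<rho>>0. \<rho> \<le> \<delta> \<and> (\<forall>r. 0 \<le> r \<longrightarrow> r < \<rho> \<longrightarrow> b < kern r)"
proof -
  have "continuous (at 0 within {0..}) w" using continuous_w[of 0] by simp
  moreover have "(kern 0 - b) * \<delta>^3 > 0" using assms delta_pos by simp
  ultimately obtain d where d: "d > 0" "\<And>r. r \<ge> 0 \<Longrightarrow> r < d \<Longrightarrow> \<bar>w r - w 0\<bar> < (kern 0 - b) * \<delta>^3"
    unfolding continuous_within_eps_delta by (auto simp: dist_real_def)
  show ?thesis
  proof (intro exI[of _ "min (d*\<delta>) \<delta>"] conjI allI impI)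
    fix r assume r: "0 \<le> r" "r < min (d*\<delta>) \<delta>"
    then have "r/\<delta> < d" using delta_pos by (simp add: field_simps)
    then have "w 0 - (kern 0 - b) * \<delta>^3 < w (r/\<delta>)" using d(2)[of "r/\<delta>"] r delta_pos by simp
    then have "(w 0 - (kern 0 - b) * \<delta>^3) / \<delta>^3 < w (r/\<delta>) / \<delta>^3"
      using delta_pos by (simp add: divide_strict_right_mono)
    then show "b < kern r" using delta_pos by (simp add: kern_def field_simps)
  qed (use d delta_pos in auto)
qed

lemma wtc_pos_near: assumes x: "0 \<le> x" "x \<le> 1" and b: "bcont x < kern 0"
  shows "\<exists>\<rho>>0. \<forall>y. \<bar>y - x\<bar> < \<rho> \<longrightarrow> wtc x y > 0"
proof -
  obtain \<rho> where \<rho>: "\<rho> > 0" "\<rho> \<le> \<delta>" "\<And>r. 0 \<le> r \<Longrightarrow> r < \<rho> \<Longrightarrow> bcont x < kern r"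
    using kern_gt_near_0[OF b] by blast
  show ?thesis
  proof (intro exI[of _ \<rho>] conjI allI impI)
    fix y assume y: "\<bar>y - x\<bar> < \<rho>"
    show "wtc x y > 0"
    proof (cases "y = x")
      case True
      have "wtc x x = kern 0" by (simp add: wtc_def w_delta_eq_kern kern0_pos less_imp_le)
      then show ?thesis using True kern0_pos by simp
    next
      case False
      then have "indicator {0<..<\<delta>} \<bar>y - x\<bar> = (1::real)" using y \<rho>(2) by simp
      moreover have "bcont x < kern \<bar>x - y\<bar>" using \<rho>(3)[of "\<bar>x - y\<bar>"] y by (simp add: abs_minus_commute)
      ultimately show ?thesis unfolding wtc_def w_delta_eq_kern by simp
    qed
  qed (rule \<rho>(1))
qed

lemma wtc_pos_far: assumes x: "0 \<le> x" "x \<le> 1" and b: "bcont x \<ge> kern 0"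
  and r0: "0 < r0" "r0 < 1" "w r0 < w 0" and y: "r0 * \<delta> < \<bar>y - x\<bar>" "\<bar>y - x\<bar> < \<delta>"
  shows "wtc x y > 0"
proof -
  have "0 < r0 * \<delta>" using r0 delta_pos by simp
  have "r0 \<le> \<bar>x - y\<bar> / \<delta>" "\<bar>x - y\<bar> / \<delta> < 1" using y delta_pos by (auto simp: field_simps abs_minus_commute)
  then have "w (\<bar>x - y\<bar> / \<delta>) < w 0" using r0 w_antimono[of r0 "\<bar>x - y\<bar> / \<delta>"] by linarith
  then have "kern \<bar>x - y\<bar> < kern 0" unfolding kern_def using delta_pos by (simp add: divide_strict_right_mono)
  then show ?thesis using b bcont_le_kern0[OF x] y \<open>0 < r0 * \<delta>\<close> by (simp add: wtc_def w_delta_eq_kern)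
qed

lemma a_delta_lebesgue: "a_delta w \<delta> x = (LINT y:{0..1}|lebesgue. w_delta w \<delta> x y)"
  unfolding a_delta_def set_lebesgue_integral_def
  by (rule integral_lebesgue_eq_lborel[symmetric]) measurable

lemma continuous_on_a_delta: "continuous_on {0..1} (a_delta w \<delta>)"
proof -
  have "continuous_on {0..1} (\<lambda>x. LINT y:{0..1}|lebesgue. (\<lambda>_. 1::real) y * w_delta w \<delta> x y)"
    by (rule continuous_on_kernel_integral[where B=1 and C="kern 0" and d=\<delta>])
       (auto intro: continuous_w_delta simp: w_delta_nonneg w_delta_le abs_of_nonneg)
  then show ?thesis by (simp add: a_delta_lebesgue)
qed

lemma a_delta_le: "a_delta w \<delta> x \<le> kern 0"
proof -
  have "a_delta w \<delta> x \<le> integral\<^sup>L lborel (\<lambda>y::real. indicator {0..1} y * kern 0)"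
    unfolding a_delta_def set_lebesgue_integral_def
  proof (rule integral_mono')
    show "integrable lborel (\<lambda>y::real. indicator {0..1} y * kern 0)"
      by (rule integrable_Icc_mult_bounded_lborel[where B="kern 0"]) (use kern0_pos in auto)
  qed (auto simp: indicator_def w_delta_le kern0_pos less_imp_le)
  also have "\<dots> = kern 0" by simp
  finally show ?thesis .
qed

lemma a_delta_ge: assumes "0 \<le> x" "x \<le> 1" shows "kern (\<delta>/2) * \<delta> / 2 \<le> a_delta w \<delta> x"
proof -
  obtain p where p: "0 \<le> p" "p + \<delta>/2 \<le> 1" "p \<le> x" "x \<le> p + \<delta>/2"
  proof (cases "x \<le> 1/2")
    case True then show ?thesis using that[of x] assms delta_lt delta_pos by auto
  next
    case False then show ?thesis using that[of "x - \<delta>/2"] assms delta_lt delta_pos by auto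
  qed
  have "kern (\<delta>/2) * \<delta> / 2 = integral\<^sup>L lborel (\<lambda>y::real. indicator {p..p+\<delta>/2} y * kern (\<delta>/2))"
    using delta_pos by simp
  also have "\<dots> \<le> integral\<^sup>L lborel (\<lambda>y. indicator {0..1} y * w_delta w \<delta> x y)"
  proof (rule integral_mono)
    show "integrable lborel (\<lambda>y. indicator {0..1} y * w_delta w \<delta> x y)"
      by (rule integrable_Icc_mult_bounded_lborel[where B="kern 0"])
         (auto simp: w_delta_nonneg w_delta_le abs_of_nonneg)
    fix y
    show "indicator {p..p+\<delta>/2} y * kern (\<delta>/2) \<le> indicator {0..1} y * w_delta w \<delta> x y"
    proof (cases "y \<in> {p..p+\<delta>/2}")
      case True
      then have "\<bar>x - y\<bar> \<le> \<delta>/2" using p unfolding abs_le_iff atLeastAtMost_iff by linarith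
      then have "kern (\<delta>/2) \<le> w_delta w \<delta> x y" unfolding w_delta_eq_kern by (intro kern_antimono) auto
      then show ?thesis using True p by (auto simp: indicator_def)
    qed (auto simp: indicator_def w_delta_nonneg)
  qed (use delta_pos in \<open>simp add: integrable_real_mult_indicator\<close>)
  also have "\<dots> = a_delta w \<delta> x" unfolding a_delta_def set_lebesgue_integral_def by simp
  finally show ?thesis .
qed

definition wtc_mass :: "real \<Rightarrow> real" where
  "wtc_mass x = (LINT y:{0..1}|lebesgue. wtc x y)"

definition slack :: "real \<Rightarrow> real" where
  "slack x = a_delta w \<delta> x - wtc_mass x"

lemma wtc_mass_lborel: "wtc_mass x = (LINT y:{0..1}|lborel. wtc x y)"
  unfolding wtc_mass_def set_lebesgue_integral_def by (rule integral_lebesgue_eq_lborel) measurable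

lemma continuous_on_wtc_mass: "continuous_on {0..1} wtc_mass"
proof -
  have "continuous_on {0..1} (\<lambda>x. LINT y:{0..1}|lebesgue. (\<lambda>_. 1::real) y * wtc x y)"
    by (rule continuous_on_kernel_integral[where B=1 and C="kern 0" and d=\<delta>])
       (auto intro: continuous_wtc simp: wtc_le wtc_nonneg abs_of_nonneg)
  then show ?thesis by (simp add: wtc_mass_def)
qed

lemma continuous_on_slack: "continuous_on {0..1} slack"
  unfolding slack_def[abs_def] by (intro continuous_on_diff continuous_on_a_delta continuous_on_wtc_mass)

text \<open>For \<open>\<bar>y - x\<bar> \<le> \<delta>/2\<close> the kernel dominates \<open>b = bcont x\<close>, so there \<open>w_delta - wtc = b\<close>;
  elsewhere on \<open>[0, x + \<delta>]\<close> it is at least \<open>-b\<close>, and beyond \<open>x + \<delta>\<close> it vanishes.\<close>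
lemma w_delta_minus_wtc_ge:
  assumes x: "\<delta>/2 < x" "x < \<delta>" and b: "0 \<le> bcont x" "bcont x \<le> kern (\<delta>/2)" and "y \<noteq> x"
  shows "bcont x * (2 * indicator {x - \<delta>/2..x + \<delta>/2} y - indicator {0..x+\<delta>} y)
           \<le> indicator {0..1} y * w_delta w \<delta> x y - indicator {0..1} y * wtc x y"
proof -
  define d where "d = \<bar>x - y\<bar>"
  have wtc_d: "wtc x y = \<bar>kern d - bcont x * indicator {0<..<\<delta>} d\<bar>"
    unfolding wtc_def w_delta_eq_kern d_def by (simp add: abs_minus_commute)
  have kd: "0 \<le> kern d" unfolding d_def by (rule kern_nonneg) simp
  consider (near) "y \<in> {x - \<delta>/2..x + \<delta>/2}" | (mid) "y \<notin> {x - \<delta>/2..x + \<delta>/2}" "y \<in> {0..x+\<delta>}"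
    | (far) "y \<notin> {0..x+\<delta>}" by blast
  then show ?thesis
  proof cases
    case near
    then have "0 < d" "d \<le> \<delta>/2" using \<open>y \<noteq> x\<close> unfolding d_def abs_le_iff atLeastAtMost_iff by auto
    moreover from this have "bcont x \<le> kern d" using b kern_antimono[of d "\<delta>/2"] by linarith
    ultimately have "wtc x y = kern d - bcont x" using wtc_d delta_pos by simp
    then show ?thesis using near x delta_lt by (simp add: w_delta_eq_kern d_def indicator_def)
  next
    case mid
    then have "y \<in> {0..1}" using x delta_lt by auto
    moreover have "wtc x y \<le> kern d + bcont x" using wtc_d kd b by (auto simp: indicator_def)
    ultimately show ?thesis using mid by (auto simp: w_delta_eq_kern d_def indicator_def)
  next
    case far
    show ?thesis
    proof (cases "y \<in> {0..1}")
      case True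
      then have "d > \<delta>" using far x unfolding d_def by auto
      then show ?thesis using far True kern_vanishes[of d] b by (simp add: wtc_d w_delta_eq_kern d_def indicator_def)
    qed (use far x b in \<open>auto simp: indicator_def\<close>)
  qed
qed

lemma slack_ge: assumes x: "\<delta>/2 < x" "x < \<delta>" and b: "0 \<le> bcont x" "bcont x \<le> kern (\<delta>/2)"
  shows "bcont x * (\<delta> - x) \<le> slack x"
proof -
  have x01: "0 \<le> x" "x \<le> 1" using x delta_lt by auto
  let ?g = "\<lambda>y. bcont x * (2 * indicator {x - \<delta>/2..x + \<delta>/2} y - indicator {0..x+\<delta>} y) :: real"
  have i1: "integrable lborel (\<lambda>y. indicator {0..1} y * w_delta w \<delta> x y)"
    by (rule integrable_Icc_mult_bounded_lborel[where B="kern 0"]) (auto simp: w_delta_nonneg w_delta_le)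
  have i2: "integrable lborel (\<lambda>y. indicator {0..1} y * wtc x y)"
    by (rule integrable_Icc_mult_bounded_lborel[where B="kern 0"]) (use wtc_le[OF x01] wtc_nonneg in auto)
  have ind: "integrable lborel (\<lambda>y::real. indicator {p..q} y :: real)" for p q
    by (simp add: integrable_indicator_iff emeasure_lborel_Icc_eq)
  then have "integral\<^sup>L lborel ?g = bcont x * (2 * \<delta> - (x + \<delta>))"
    using x delta_pos by simp
  also have "\<dots> = bcont x * (\<delta> - x)" by (simp add: algebra_simps)
  finally have "bcont x * (\<delta> - x) = integral\<^sup>L lborel ?g" by (rule sym)
  also have "\<dots> \<le> integral\<^sup>L lborel (\<lambda>y. indicator {0..1} y * w_delta w \<delta> x y - indicator {0..1} y * wtc x y)"
    using i1 i2 ind AE_lborel_singleton[of x]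
    by (intro integral_mono_AE) (auto elim!: eventually_mono intro!: w_delta_minus_wtc_ge[OF x b])
  also have "\<dots> = slack x"
    using i1 i2 by (simp add: slack_def a_delta_def wtc_mass_lborel set_lebesgue_integral_def)
  finally show ?thesis .
qed

lemma slack_pos_near_delta: "\<exists>x. \<delta>/2 < x \<and> x < \<delta> \<and> slack x > 0"
proof -
  define \<eta> where "\<eta> = min (\<delta>/4) (kern (\<delta>/2) * \<delta> / kern 0)"
  have \<eta>: "0 < \<eta>" "\<eta> \<le> \<delta>/4" "\<eta> \<le> kern (\<delta>/2) * \<delta> / kern 0"
    unfolding \<eta>_def using delta_pos kern_half_pos kern0_pos by (simp_all only: min.cobounded1 min.cobounded2) simp
  define x where "x = \<delta> - \<eta>"
  have x: "\<delta>/2 < x" "x < \<delta>" "0 < x" using \<eta> delta_pos unfolding x_def by auto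
  have "bcont x \<le> kern 0 * (\<delta> - x) / (\<delta> + x)" using x by (intro bcont_le_left) auto
  also have "\<dots> \<le> kern 0 * \<eta> / \<delta>" unfolding x_def using \<eta> delta_pos kern0_pos by (intro divide_mono) auto
  also have "\<dots> \<le> kern (\<delta>/2)" using \<eta>(3) kern0_pos delta_pos by (simp add: field_simps)
  finally have "bcont x \<le> kern (\<delta>/2)" .
  moreover have "bcont x > 0"
    using bcont_left[of x] moment_left_pos[of x] x delta_pos delta_lt by simp
  moreover from calculation have "0 < bcont x * (\<delta> - x)" using x by simp
  ultimately have "0 < slack x" using slack_ge[of x] x by linarith
  then show ?thesis using x by blast
qed

lemma slack_pos_if_w_constant:
  assumes x: "0 \<le> x" "x \<le> 1" and b: "bcont x \<ge> kern 0" and const: "\<forall>r. 0 \<le> r \<and> r < 1 \<longrightarrow> w r = w 0"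
  shows "slack x > 0"
proof -
  have bW: "bcont x = kern 0" using b bcont_le_kern0[OF x] by simp
  have "AE y in lebesgue. indicator {0..1} y *\<^sub>R wtc x y = 0"
    using AE_completion[OF AE_lborel_singleton[of x]]
  proof eventually_elim
    case (elim y)
    show ?case
    proof (cases "\<bar>y - x\<bar> < \<delta>")
      case True
      then have "\<bar>x - y\<bar> / \<delta> < 1" using delta_pos by (simp add: abs_minus_commute)
      then have "kern \<bar>x - y\<bar> = kern 0"
        unfolding kern_def using const[rule_format, of "\<bar>x - y\<bar> / \<delta>"] delta_pos by simp
      then show ?thesis using True elim unfolding wtc_def w_delta_eq_kern bW by (simp add: abs_minus_commute)
    next
      case False
      then show ?thesis unfolding wtc_def w_delta_eq_kern using kern_vanishes[of "\<bar>x - y\<bar>"]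
        by (simp add: abs_minus_commute)
    qed
  qed
  then have "wtc_mass x = 0" unfolding wtc_mass_def set_lebesgue_integral_def by (rule integral_eq_zero_AE)
  moreover have "0 < kern (\<delta>/2) * \<delta> / 2" using kern_half_pos delta_pos by simp
  ultimately show ?thesis unfolding slack_def using a_delta_ge[OF x] by linarith
qed

end

locale comparison_problem = nonlocal_kernel +
  fixes \<phi> :: "real \<Rightarrow> real"
  assumes A2: "\<forall>x. 0 < x \<and> x < 1 \<longrightarrow>
               a_delta w \<delta> x \<ge> set_lebesgue_integral lborel {0..1} (\<lambda>y. wt_delta w \<delta> x y)"
    and L2: "L2_Omega \<phi>"
    and Pt_nonneg: "AE x in lebesgue. x \<in> {0<..<1} \<longrightarrow> Pt_delta w \<delta> \<phi> x \<ge> 0"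
begin

lemma slack_nonneg: assumes "0 \<le> x" "x \<le> 1" shows "0 \<le> slack x"
proof -
  have "0 \<le> slack x" if "0 < x" "x < 1" for x
  proof -
    have "wt_delta w \<delta> x = wtc x" by (intro ext wt_delta_eq_wtc that)
    then show ?thesis using A2[rule_format, of x] that by (simp add: slack_def wtc_mass_lborel)
  qed
  moreover have "continuous_on (closure {0<..<1}) slack" "x \<in> closure {0<..<1::real}"
    using continuous_on_slack assms by auto
  ultimately show ?thesis using continuous_ge_on_closure by (metis greaterThanLessThan_iff)
qed

definition phi_Omega :: "real \<Rightarrow> real" where "phi_Omega y = indicator {0<..<1} y * \<phi> y"

definition v :: "real \<Rightarrow> real" where "v y = indicator {0<..<1} y * max 0 (- \<phi> y)"

definition Kv :: "real \<Rightarrow> real" where "Kv x = (LINT y:{0..1}|lebesgue. v y * wtc x y)"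

lemma phi_Omega_measurable[measurable]: "phi_Omega \<in> borel_measurable lebesgue"
  using L2 unfolding L2_Omega_def set_borel_measurable_def phi_Omega_def by (simp add: fun_eq_iff)

text \<open>\<open>L\<^sup>2(\<Omega>) \<subseteq> L\<^sup>1(\<Omega>)\<close> via \<open>\<bar>t\<bar> \<le> 1 + t\<^sup>2\<close>.\<close>
lemma integrable_phi_Omega: "integrable lebesgue phi_Omega"
proof (rule Bochner_Integration.integrable_bound
    [where f="\<lambda>y. indicator {0<..<1} y + indicator {0<..<1} y * (\<phi> y)^2"])
  have "integrable lborel (\<lambda>y::real. indicator {0<..<1} y :: real)"
    by (simp add: integrable_indicator_iff ennreal_less_top)
  moreover have "integrable lebesgue (\<lambda>y. indicator {0<..<1} y * (\<phi> y)^2)"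
    using L2 unfolding L2_Omega_def set_integrable_def by simp
  ultimately show "integrable lebesgue (\<lambda>y. indicator {0<..<1} y + indicator {0<..<1} y * (\<phi> y)^2)"
    by (rule Bochner_Integration.integrable_add[OF integrable_lebesgue_of_lborel])
  have "\<bar>t\<bar> \<le> 1 + t^2" for t :: real
  proof -
    have "0 \<le> (\<bar>t\<bar> - 1)^2" by simp
    moreover have "(\<bar>t\<bar> - 1)^2 = t^2 - 2 * \<bar>t\<bar> + 1" by (simp add: power2_diff)
    ultimately show ?thesis using abs_ge_zero[of t] by linarith
  qed
  then show "AE x in lebesgue. norm (phi_Omega x) \<le> norm (indicator {0<..<1} x + indicator {0<..<1} x * (\<phi> x)^2)"
    by (intro AE_I2) (auto simp: phi_Omega_def indicator_def)
qed simp

lemma v_eq: "v y = max 0 (- phi_Omega y)" unfolding v_def phi_Omega_def by (auto simp: indicator_def)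
lemma v_measurable[measurable]: "v \<in> borel_measurable lebesgue" unfolding v_eq[abs_def] by measurable
lemma v_nonneg: "0 \<le> v y" unfolding v_def by (auto simp: indicator_def)
lemma v_outside: "y \<notin> {0<..<1} \<Longrightarrow> v y = 0" unfolding v_def by simp

lemma integrable_v: "integrable lebesgue v"
  by (rule Bochner_Integration.integrable_bound[OF integrable_phi_Omega v_measurable]) (auto simp: v_eq)

lemma integrable_mult_wtc:
  assumes "integrable lebesgue g" "0 \<le> x" "x \<le> 1"
  shows "integrable lebesgue (\<lambda>y. g y * wtc x y)"
  by (rule integrable_mult_bounded[OF assms(1), where B="kern 0"]) (use wtc_le[OF assms(2,3)] wtc_nonneg in auto)

lemma Kv_eq: "Kv x = integral\<^sup>L lebesgue (\<lambda>y. v y * wtc x y)"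
  unfolding Kv_def set_lebesgue_integral_def
  by (rule Bochner_Integration.integral_cong) (auto simp: v_def indicator_def)

lemma Pt_delta_eq: assumes "0 < x" "x < 1"
  shows "Pt_delta w \<delta> \<phi> x = a_delta w \<delta> x * \<phi> x - integral\<^sup>L lebesgue (\<lambda>y. phi_Omega y * wtc x y)"
proof -
  let ?f = "\<lambda>y. phi_Omega y * wtc x y + indicator {0} y * (\<phi> 0 * wtc x 0) + indicator {1} y * (\<phi> 1 * wtc x 1)"
  have "(LINT y:{0..1}|lebesgue. \<phi> y * wt_delta w \<delta> x y) = integral\<^sup>L lebesgue ?f"
    unfolding set_lebesgue_integral_def
    by (rule arg_cong[where f="integral\<^sup>L lebesgue"])
       (auto simp: fun_eq_iff indicator_def phi_Omega_def wt_delta_eq_wtc[OF assms])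
  also have "\<dots> = integral\<^sup>L lebesgue (\<lambda>y. phi_Omega y * wtc x y)"
  proof (rule integral_cong_AE)
    show "AE y in lebesgue. ?f y = phi_Omega y * wtc x y"
      using AE_completion[OF AE_lborel_avoid3[of 0 1 0]] by eventually_elim (auto simp: indicator_def)
  qed (intro borel_measurable_add borel_measurable_times phi_Omega_measurable wtc_measurable_lebesgue
         borel_measurable_indicator borel_measurable_const; simp)+
  finally show ?thesis unfolding Pt_delta_def by simp
qed

lemma a_delta_mult_v_le_Kv: assumes x: "0 < x" "x < 1" and Pt: "Pt_delta w \<delta> \<phi> x \<ge> 0"
  shows "a_delta w \<delta> x * v x \<le> Kv x"
proof (cases "\<phi> x \<ge> 0")
  case True
  then have "v x = 0" unfolding v_def by auto
  moreover have "0 \<le> Kv x" unfolding Kv_eq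
    by (rule Bochner_Integration.integral_nonneg) (simp add: v_nonneg wtc_nonneg)
  ultimately show ?thesis by simp
next
  case False
  have x01: "0 \<le> x" "x \<le> 1" using x by auto
  have "a_delta w \<delta> x * v x \<le> - integral\<^sup>L lebesgue (\<lambda>y. phi_Omega y * wtc x y)"
    using Pt Pt_delta_eq[OF x] False x by (simp add: v_def)
  also have "\<dots> = integral\<^sup>L lebesgue (\<lambda>y. - phi_Omega y * wtc x y)" by simp
  also have "\<dots> \<le> integral\<^sup>L lebesgue (\<lambda>y. v y * wtc x y)"
  proof (rule integral_mono)
    fix y
    have "- phi_Omega y \<le> v y" by (simp add: v_eq)
    then show "- phi_Omega y * wtc x y \<le> v y * wtc x y" using wtc_nonneg by (rule mult_right_mono)
  qed (use integrable_mult_wtc[OF integrable_phi_Omega x01] integrable_mult_wtc[OF integrable_v x01] in auto)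
  finally show ?thesis by (simp add: Kv_eq)
qed

lemma a_delta_mult_v_le_Kv_AE: "AE x in lebesgue. x \<in> {0<..<1} \<longrightarrow> a_delta w \<delta> x * v x \<le> Kv x"
  using Pt_nonneg by eventually_elim (auto intro: a_delta_mult_v_le_Kv)

lemma Kv_le: assumes "0 \<le> x" "x \<le> 1" shows "Kv x \<le> kern 0 * integral\<^sup>L lebesgue v"
proof -
  have "Kv x \<le> integral\<^sup>L lebesgue (\<lambda>y. kern 0 * v y)" unfolding Kv_eq
    using integrable_mult_wtc[OF integrable_v assms] integrable_v
    by (intro integral_mono) (auto simp: mult.commute[of "kern 0"] intro!: mult_left_mono wtc_le assms v_nonneg)
  then show ?thesis by simp
qed

lemma v_bounded_AE: "AE x in lebesgue. v x \<le> kern 0 * integral\<^sup>L lebesgue v / (kern (\<delta>/2) * \<delta> / 2)"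
  using a_delta_mult_v_le_Kv_AE
proof eventually_elim
  case (elim x)
  have pos: "0 < kern (\<delta>/2) * \<delta> / 2" using kern_half_pos delta_pos by simp
  have "0 \<le> kern 0 * integral\<^sup>L lebesgue v" using kern0_pos v_nonneg by (simp add: integral_nonneg_AE)
  show ?case
  proof (cases "x \<in> {0<..<1}")
    case True
    then have x: "0 \<le> x" "x \<le> 1" by auto
    have "kern (\<delta>/2) * \<delta> / 2 * v x \<le> a_delta w \<delta> x * v x"
      using a_delta_ge[OF x] v_nonneg[of x] by (rule mult_right_mono)
    also have "\<dots> \<le> kern 0 * integral\<^sup>L lebesgue v" using elim True Kv_le[OF x] by auto
    finally show ?thesis using pos by (simp add: field_simps)
  qed (use pos \<open>0 \<le> kern 0 * _\<close> v_outside in auto)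
qed

definition M :: real where "M = Inf {c. AE x in lebesgue. v x \<le> c}"

lemma essential_bound_nonneg: assumes "AE x in lebesgue. v x \<le> c" shows "0 \<le> c"
proof -
  obtain x where "0 < x" "x < (1::real)" "v x \<le> c"
    using AE_lebesgue_ex_in_interval[of 0 1 "\<lambda>x. v x \<le> c"] assms by auto
  then show ?thesis using v_nonneg[of x] by simp
qed

lemma bdd_below_essential_bounds: "bdd_below {c. AE x in lebesgue. v x \<le> c}"
  using essential_bound_nonneg by (auto simp: bdd_below_def)

lemma M_nonneg: "0 \<le> M"
  unfolding M_def using v_bounded_AE essential_bound_nonneg by (intro cInf_greatest) auto

lemma v_le_M_AE: "AE x in lebesgue. v x \<le> M"
proof -
  have "AE x in lebesgue. v x \<le> M + 1 / Suc n" for n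
  proof -
    obtain c where "AE x in lebesgue. v x \<le> c" "c < M + 1 / Suc n"
      using cInf_less_iff[OF _ bdd_below_essential_bounds, of "M + 1 / Suc n"] v_bounded_AE
      unfolding M_def by fastforce
    then show ?thesis by (auto elim!: eventually_mono)
  qed
  then have "AE x in lebesgue. \<forall>n. v x \<le> M + 1 / Suc n" by (simp add: AE_all_countable)
  then show ?thesis
  proof eventually_elim
    case (elim x)
    show ?case
    proof (rule ccontr)
      assume "\<not> v x \<le> M"
      then have "0 < v x - M" by simp
      then obtain n where "inverse (real (Suc n)) < v x - M" using reals_Archimedean by blast
      then show False using elim[rule_format, of n] by (simp add: inverse_eq_divide)
    qed
  qed
qed

lemma not_v_le_M_minus_AE: assumes "0 < t" shows "\<not> (AE x in lebesgue. v x \<le> M - t)"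
proof
  assume "AE x in lebesgue. v x \<le> M - t"
  then have "M \<le> M - t" unfolding M_def using bdd_below_essential_bounds by (intro cInf_lower) auto
  then show False using assms by simp
qed

definition vt :: "real \<Rightarrow> real" where "vt y = min (v y) M"

lemma vt_measurable[measurable]: "vt \<in> borel_measurable lebesgue" unfolding vt_def[abs_def] by measurable
lemma vt_nonneg: "0 \<le> vt y" unfolding vt_def using v_nonneg M_nonneg by simp
lemma vt_le_M: "vt y \<le> M" unfolding vt_def by simp
lemma vt_eq_v_AE: "AE y in lebesgue. vt y = v y" using v_le_M_AE by eventually_elim (simp add: vt_def)

text \<open>Using \<open>vt\<close> rather than \<open>v\<close> keeps the integrands of \<open>Phi\<close> and \<open>R\<close> bounded everywhere,
  not just a.e.\<close>
definition Phi :: "real \<Rightarrow> real" where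
  "Phi x = M * a_delta w \<delta> x - (LINT y:{0..1}|lebesgue. vt y * wtc x y)"

definition R :: "real \<Rightarrow> real" where
  "R x = (LINT y:{0..1}|lebesgue. (M - vt y) * wtc x y)"

lemma continuous_on_Phi: "continuous_on {0..1} Phi"
proof -
  have "continuous_on {0..1} (\<lambda>x. LINT y:{0..1}|lebesgue. vt y * wtc x y)"
    by (rule continuous_on_kernel_integral[where B=M and C="kern 0" and d=\<delta>])
       (use vt_nonneg vt_le_M wtc_le wtc_nonneg continuous_wtc in auto)
  then show ?thesis unfolding Phi_def[abs_def]
    by (intro continuous_on_diff continuous_on_mult continuous_on_a_delta continuous_on_const)
qed

lemma Phi_eq_slack_R: assumes "0 \<le> x" "x \<le> 1" shows "Phi x = M * slack x + R x"
proof -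
  have bounded: "\<bar>vt y * wtc x y\<bar> \<le> M * kern 0" for y
    unfolding abs_mult using vt_nonneg[of y] vt_le_M[of y] wtc_le[OF assms, of y] wtc_nonneg[of x y] M_nonneg
    by (auto intro!: mult_mono)
  have i1: "integrable lebesgue (\<lambda>y. indicator {0..1} y * wtc x y)"
    by (rule integrable_Icc_mult_bounded[where B="kern 0"]) (use wtc_le[OF assms] wtc_nonneg in auto)
  have i2: "integrable lebesgue (\<lambda>y. indicator {0..1} y * (vt y * wtc x y))"
    by (rule integrable_Icc_mult_bounded[OF _ bounded]) measurable
  have "R x = integral\<^sup>L lebesgue (\<lambda>y. M * (indicator {0..1} y * wtc x y) - indicator {0..1} y * (vt y * wtc x y))"
    unfolding R_def set_lebesgue_integral_def by (rule Bochner_Integration.integral_cong) (auto simp: algebra_simps)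
  also have "\<dots> = M * wtc_mass x - (LINT y:{0..1}|lebesgue. vt y * wtc x y)"
    using i1 i2 unfolding wtc_mass_def set_lebesgue_integral_def by simp
  finally show ?thesis unfolding Phi_def slack_def by (simp add: algebra_simps)
qed

lemma R_nonneg: "0 \<le> R x"
  unfolding R_def set_lebesgue_integral_def
  by (rule Bochner_Integration.integral_nonneg) (use vt_le_M wtc_nonneg in \<open>auto simp: indicator_def\<close>)

lemma Phi_nonneg: "0 \<le> x \<Longrightarrow> x \<le> 1 \<Longrightarrow> 0 \<le> Phi x"
  using Phi_eq_slack_R slack_nonneg M_nonneg R_nonneg by simp

lemma Phi_le_AE: "AE x in lebesgue. x \<in> {0<..<1} \<longrightarrow> Phi x \<le> a_delta w \<delta> x * (M - v x)"
proof -
  have vt_Kv: "(LINT y:{0..1}|lebesgue. vt y * wtc x y) = Kv x" for x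
    unfolding Kv_def set_lebesgue_integral_def
  proof (rule integral_cong_AE)
    show "AE y in lebesgue. indicator {0..1} y *\<^sub>R (vt y * wtc x y) = indicator {0..1} y *\<^sub>R (v y * wtc x y)"
      using vt_eq_v_AE by eventually_elim simp
  qed (intro borel_measurable_scaleR borel_measurable_times borel_measurable_indicator
         vt_measurable v_measurable wtc_measurable_lebesgue; simp)+
  show ?thesis
    using a_delta_mult_v_le_Kv_AE by eventually_elim (auto simp: Phi_def vt_Kv algebra_simps)
qed

lemma Phi_small_somewhere: assumes t: "0 < t" "t < M" shows "\<exists>x\<in>{0..1}. Phi x \<le> kern 0 * t"
proof -
  let ?P = "\<lambda>x. (x \<in> {0<..<1} \<longrightarrow> Phi x \<le> a_delta w \<delta> x * (M - v x)) \<and> v x \<le> M"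
  have AE_P: "AE x in lebesgue. ?P x"
    using Phi_le_AE v_le_M_AE by eventually_elim simp
  have "\<not> (\<forall>x. ?P x \<longrightarrow> v x \<le> M - t)"
  proof
    assume H: "\<forall>x. ?P x \<longrightarrow> v x \<le> M - t"
    have "AE x in lebesgue. v x \<le> M - t" using AE_P by (rule eventually_mono) (use H in blast)
    then show False using not_v_le_M_minus_AE t by simp
  qed
  then obtain x where x: "?P x" "\<not> v x \<le> M - t" by blast
  have "x \<in> {0<..<1}"
  proof (rule ccontr)
    assume "x \<notin> {0<..<1}"
    then show False using v_outside[of x] x(2) t by simp
  qed
  moreover have "a_delta w \<delta> x * (M - v x) \<le> kern 0 * t"
    by (rule mult_mono) (use a_delta_le[of x] x kern0_pos in auto)
  ultimately have "Phi x \<le> kern 0 * t" using x(1) by auto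
  then show ?thesis using \<open>x \<in> {0<..<1}\<close> by (intro bexI[of _ x]) auto
qed

lemma Phi_has_zero: assumes "M > 0" shows "\<exists>x0\<in>{0..1}. Phi x0 = 0"
proof -
  obtain x0 where x0: "x0 \<in> {0..1}" "\<And>y. y \<in> {0..1} \<Longrightarrow> Phi x0 \<le> Phi y"
    using continuous_attains_inf[OF compact_Icc _ continuous_on_Phi] by fastforce
  have "Phi x0 \<le> 0"
  proof (rule ccontr)
    assume pos: "\<not> Phi x0 \<le> 0"
    define t where "t = min (M/2) (Phi x0 / (2 * kern 0))"
    have t: "0 < t" "t < M" using assms pos kern0_pos unfolding t_def by auto
    have "kern 0 * t \<le> kern 0 * (Phi x0 / (2 * kern 0))" unfolding t_def using kern0_pos by (intro mult_left_mono) auto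
    also have "\<dots> < Phi x0" using kern0_pos pos by (simp add: field_simps)
    finally show False using Phi_small_somewhere[OF t] x0(2) by force
  qed
  then show ?thesis using x0 Phi_nonneg[of x0] by force
qed

lemma slack_zero_if_Phi_zero: assumes "M > 0" "0 \<le> x" "x \<le> 1" "Phi x = 0" shows "slack x = 0"
  using Phi_eq_slack_R[OF assms(2,3)] slack_nonneg[OF assms(2,3)] R_nonneg[of x] assms(1,4)
  by (auto simp: add_nonneg_eq_0_iff zero_less_mult_iff)

lemma R_zero_if_Phi_zero: assumes "M > 0" "0 \<le> x" "x \<le> 1" "Phi x = 0" shows "R x = 0"
  using Phi_eq_slack_R[OF assms(2,3)] slack_nonneg[OF assms(2,3)] R_nonneg[of x] assms(1,4)
  by (auto simp: add_nonneg_eq_0_iff zero_less_mult_iff)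

lemma R_zero_AE: assumes "0 \<le> x" "x \<le> 1" "R x = 0"
  shows "AE y in lebesgue. y \<in> {0..1} \<longrightarrow> (M - vt y) * wtc x y = 0"
proof -
  have int: "integrable lebesgue (\<lambda>y. indicator {0..1} y * ((M - vt y) * wtc x y))"
  proof (rule integrable_Icc_mult_bounded[where B="M * kern 0"])
    show "\<bar>(M - vt y) * wtc x y\<bar> \<le> M * kern 0" for y
      unfolding abs_mult using vt_nonneg[of y] vt_le_M[of y] wtc_le[OF assms(1,2), of y] wtc_nonneg[of x y] M_nonneg
      by (auto intro!: mult_mono)
  qed measurable
  have "integral\<^sup>L lebesgue (\<lambda>y. indicator {0..1} y * ((M - vt y) * wtc x y)) = 0"
    using assms(3) unfolding R_def set_lebesgue_integral_def by simp
  then have "AE y in lebesgue. indicator {0..1} y * ((M - vt y) * wtc x y) = 0"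
    using integral_nonneg_eq_0_iff_AE[OF int] vt_le_M wtc_nonneg by (auto simp: indicator_def)
  then show ?thesis by eventually_elim (auto simp: indicator_def)
qed

text \<open>A zero \<open>x\<close> of \<open>Phi\<close> forces \<open>v = M\<close> a.e. where \<open>wtc x \<cdot> > 0\<close>, hence \<open>Phi \<le> 0\<close> a.e. there;
  by continuity and \<open>Phi \<ge> 0\<close>, \<open>Phi\<close> vanishes on the closure of that set.\<close>
lemma Phi_zero_spreads:
  assumes M: "M > 0" and x: "0 \<le> x" "x \<le> 1" "Phi x = 0"
    and pq: "p < q" "0 \<le> p" "q \<le> 1" and pos: "\<And>y. p < y \<Longrightarrow> y < q \<Longrightarrow> wtc x y > 0"
    and y0: "p \<le> y0" "y0 \<le> q"
  shows "Phi y0 = 0"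
proof -
  have AE_zero: "AE y in lebesgue. p < y \<and> y < q \<longrightarrow> Phi y \<le> 0"
    using R_zero_AE[OF x(1,2) R_zero_if_Phi_zero[OF M x]] vt_eq_v_AE Phi_le_AE
  proof eventually_elim
    case (elim y)
    show ?case
    proof
      assume y: "p < y \<and> y < q"
      then have "vt y = M" using elim pos[of y] pq by auto
      then show "Phi y \<le> 0" using elim y pq by auto
    qed
  qed
  show "Phi y0 = 0"
  proof (rule ccontr)
    assume "Phi y0 \<noteq> 0"
    then have pos0: "Phi y0 > 0" using Phi_nonneg[of y0] y0 pq by force
    have "y0 \<in> {0..1}" using y0 pq by auto
    from continuous_on_iff[THEN iffD1, OF continuous_on_Phi, rule_format, OF this pos0]
    obtain d where d: "d > 0" "\<And>y. y \<in> {0..1} \<Longrightarrow> dist y y0 < d \<Longrightarrow> dist (Phi y) (Phi y0) < Phi y0"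
      by blast
    have "max p (y0 - d) < min q (y0 + d)" using d pq y0 by auto
    from AE_lebesgue_ex_in_interval[OF this AE_zero]
    obtain y where "max p (y0 - d) < y" "y < min q (y0 + d)" "Phi y \<le> 0" by auto
    then show False using d(2)[of y] pq by (auto simp: dist_real_def abs_less_iff)
  qed
qed

text \<open>An interior zero spreads to the left down to \<open>\<delta>\<close> and beyond, into the region where
  \<open>slack > 0\<close>.\<close>
lemma Phi_nonzero_middle: assumes M: "M > 0" and x: "\<delta> \<le> x" "x \<le> 1 - \<delta>" shows "Phi x \<noteq> 0"
proof
  assume "Phi x = 0"
  moreover have "continuous_on {\<delta>..1-\<delta>} Phi"
    using continuous_on_subset[OF continuous_on_Phi] delta_pos by auto
  ultimately obtain m where m: "m \<in> {\<delta>..1-\<delta>}" "Phi m = 0" and m_least: "\<forall>y\<in>{\<delta>..1-\<delta>}. Phi y = 0 \<longrightarrow> m \<le> y"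
    using continuous_on_Icc_least_zero[of \<delta> "1-\<delta>" Phi x] x by auto
  have m01: "0 \<le> m" "m \<le> 1" using m(1) delta_pos by auto
  have near_m: "Phi y = 0" if "m - \<delta> \<le> y" "y \<le> m + \<delta>" for y
  proof (rule Phi_zero_spreads[OF M m01 m(2) _ _ _ _ that])
    show "\<And>y. m - \<delta> < y \<Longrightarrow> y < m + \<delta> \<Longrightarrow> 0 < wtc m y"
      using m(1) by (intro wtc_pos_middle) (auto simp: abs_less_iff)
  qed (use m(1) delta_pos in auto)
  have "m = \<delta>"
  proof (rule ccontr)
    assume "m \<noteq> \<delta>"
    define y where "y = max \<delta> (m - \<delta>/2)"
    have "y \<in> {\<delta>..1-\<delta>}" "m - \<delta> \<le> y" "y \<le> m + \<delta>" "y < m"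
      using m(1) delta_pos \<open>m \<noteq> \<delta>\<close> unfolding y_def by auto
    then show False using m_least near_m[of y] by auto
  qed
  obtain y where y: "\<delta>/2 < y" "y < \<delta>" "slack y > 0" using slack_pos_near_delta by blast
  then have "Phi y = 0" using near_m \<open>m = \<delta>\<close> by auto
  then show False using slack_zero_if_Phi_zero[OF M, of y] y delta_lt by auto
qed

lemma Phi_zero_spreads_near:
  assumes M: "M > 0" and z: "0 \<le> z" "z \<le> 1" "Phi z = 0" and b: "bcont z < kern 0"
  shows "\<exists>\<rho>>0. \<forall>y\<in>{0..1}. \<bar>y - z\<bar> < \<rho> \<longrightarrow> Phi y = 0"
proof -
  obtain \<rho> where \<rho>: "\<rho> > 0" "\<And>y. \<bar>y - z\<bar> < \<rho> \<Longrightarrow> wtc z y > 0"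
    using wtc_pos_near[OF z(1,2) b] by blast
  have "Phi y = 0" if y: "y \<in> {0..1}" "\<bar>y - z\<bar> < \<rho>/2" for y
  proof (rule Phi_zero_spreads[OF M z, of "max 0 (z - \<rho>/2)" "min 1 (z + \<rho>/2)"])
    show "\<And>y. max 0 (z - \<rho>/2) < y \<Longrightarrow> y < min 1 (z + \<rho>/2) \<Longrightarrow> 0 < wtc z y"
      using \<rho> by (intro \<rho>(2)) (auto simp: abs_less_iff)
  next
    show "max 0 (z - \<rho>/2) \<le> y" "y \<le> min 1 (z + \<rho>/2)"
      using y unfolding abs_less_iff atLeastAtMost_iff by auto
  qed (use \<rho>(1) z in auto)
  then show ?thesis using \<rho>(1) by (intro exI[of _ "\<rho>/2"]) auto
qed

text \<open>Saturation happens only at an endpoint. There a zero of \<open>Phi\<close> spreads to \<open>\<delta>\<close> or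
  \<open>1 - \<delta>\<close>, unless \<open>w\<close> is constant on \<open>[0,1)\<close>, in which case \<open>wtc\<close> vanishes and the slack is
  positive.\<close>
lemma Phi_nonzero_if_bcont_saturated:
  assumes M: "M > 0" and z: "0 \<le> z" "z \<le> 1" and b: "kern 0 \<le> bcont z" shows "Phi z \<noteq> 0"
proof
  assume Phi_z: "Phi z = 0"
  have "\<not> (0 < z \<and> z < 1)" using bcont_less_kern0[of z] b by auto
  then have z01: "z = 0 \<or> z = 1" using z by auto
  show False
  proof (cases "\<exists>r0. 0 < r0 \<and> r0 < 1 \<and> w r0 < w 0")
    case True
    then obtain r0 where r0: "0 < r0" "r0 < 1" "w r0 < w 0" by blast
    have r0\<delta>: "0 < r0 * \<delta>" "r0 * \<delta> < \<delta>" using r0 delta_pos by auto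
    have pos: "wtc z y > 0" if "r0 * \<delta> < \<bar>y - z\<bar>" "\<bar>y - z\<bar> < \<delta>" for y
      using wtc_pos_far[OF z b r0 that] .
    from z01 show False
    proof
      assume z0: "z = 0"
      have "Phi \<delta> = 0"
      proof (rule Phi_zero_spreads[OF M z Phi_z, of "r0 * \<delta>" \<delta>])
        fix y assume "r0 * \<delta> < y" "y < \<delta>"
        then show "0 < wtc z y" using z0 r0\<delta> by (intro pos) auto
      qed (use r0\<delta> delta_lt in linarith)+
      then show False using Phi_nonzero_middle[OF M, of \<delta>] delta_lt by auto
    next
      assume z1: "z = 1"
      have "Phi (1 - \<delta>) = 0"
      proof (rule Phi_zero_spreads[OF M z Phi_z, of "1 - \<delta>" "1 - r0 * \<delta>"])
        fix y assume "1 - \<delta> < y" "y < 1 - r0 * \<delta>"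
        then show "0 < wtc z y" using z1 r0\<delta> by (intro pos) auto
      qed (use r0\<delta> delta_lt in linarith)+
      then show False using Phi_nonzero_middle[OF M, of "1 - \<delta>"] delta_lt by auto
    qed
  next
    case False
    then have "\<forall>r. 0 \<le> r \<and> r < 1 \<longrightarrow> w r = w 0"
      using w_le_w0 by (metis linorder_not_le order_antisym_conv order_le_less)
    from slack_pos_if_w_constant[OF z b this] show False
      using slack_zero_if_Phi_zero[OF M z Phi_z] by simp
  qed
qed

text \<open>The zero of \<open>Phi\<close> nearest to the middle would have to spread further inwards.\<close>
lemma M_eq_0: "M = 0"
proof (rule ccontr)
  assume "M \<noteq> 0"
  then have M: "M > 0" using M_nonneg by simp
  have spreads: "\<exists>\<rho>>0. \<forall>y\<in>{0..1}. \<bar>y - z\<bar> < \<rho> \<longrightarrow> Phi y = 0" if "0 \<le> z" "z \<le> 1" "Phi z = 0" for z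
    using Phi_zero_spreads_near[OF M that] Phi_nonzero_if_bcont_saturated[OF M that(1,2)] that(3)
    by (cases "bcont z < kern 0") auto
  have cont: "continuous_on {p..q} Phi" if "0 \<le> p" "q \<le> 1" for p q
    using continuous_on_subset[OF continuous_on_Phi] that by auto
  obtain x0 where x0: "x0 \<in> {0..1}" "Phi x0 = 0" using Phi_has_zero[OF M] by blast
  have "\<not> (\<delta> \<le> x0 \<and> x0 \<le> 1 - \<delta>)" using Phi_nonzero_middle[OF M] x0(2) by blast
  then consider "x0 < \<delta>" | "1 - \<delta> < x0" by linarith
  then show False
  proof cases
    case 1
    then obtain z where z: "z \<in> {0..\<delta>}" "Phi z = 0" and z_greatest: "\<forall>y\<in>{0..\<delta>}. Phi y = 0 \<longrightarrow> y \<le> z"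
      using continuous_on_Icc_greatest_zero[OF cont, of 0 \<delta> x0] x0 delta_lt by auto
    have "z < \<delta>" using z Phi_nonzero_middle[OF M, of z] delta_lt by force
    obtain \<rho> where \<rho>: "\<rho> > 0" "\<forall>y\<in>{0..1}. \<bar>y - z\<bar> < \<rho> \<longrightarrow> Phi y = 0"
      using spreads[of z] z delta_lt by auto
    define y where "y = min \<delta> (z + \<rho>/2)"
    have y: "y \<in> {0..\<delta>}" "y \<in> {0..1}" "\<bar>y - z\<bar> < \<rho>" "z < y"
      using z(1) \<rho>(1) \<open>z < \<delta>\<close> delta_lt unfolding y_def by auto
    then have "Phi y = 0" using \<rho>(2) by blast
    then show False using z_greatest y by force
  next
    case 2
    then obtain z where z: "z \<in> {1-\<delta>..1}" "Phi z = 0" and z_least: "\<forall>y\<in>{1-\<delta>..1}. Phi y = 0 \<longrightarrow> z \<le> y"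
      using continuous_on_Icc_least_zero[OF cont, of "1-\<delta>" 1 x0] x0 delta_lt by auto
    have "1 - \<delta> < z" using z Phi_nonzero_middle[OF M, of z] delta_lt by force
    obtain \<rho> where \<rho>: "\<rho> > 0" "\<forall>y\<in>{0..1}. \<bar>y - z\<bar> < \<rho> \<longrightarrow> Phi y = 0"
      using spreads[of z] z delta_lt by auto
    define y where "y = max (1 - \<delta>) (z - \<rho>/2)"
    have y: "y \<in> {1-\<delta>..1}" "y \<in> {0..1}" "\<bar>y - z\<bar> < \<rho>" "y < z"
      using z(1) \<rho>(1) \<open>1 - \<delta> < z\<close> delta_lt unfolding y_def by auto
    then have "Phi y = 0" using \<rho>(2) by blast
    then show False using z_least y by force
  qed
qed

lemma phi_nonneg_AE: "AE x in lebesgue. x \<in> {0<..<1} \<longrightarrow> \<phi> x \<ge> 0"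
  using v_le_M_AE by eventually_elim (auto simp: M_eq_0 v_def)

end

theorem mainTheorem2:
  fixes w :: "real \<Rightarrow> real" and \<delta> :: real and \<phi> :: "real \<Rightarrow> real"
  assumes "A1 w"
    and "0 < \<delta>" and "\<delta> < 1/2"
    and A2: "\<forall>x. 0 < x \<and> x < 1 \<longrightarrow>
               a_delta w \<delta> x \<ge> set_lebesgue_integral lborel {0..1} (\<lambda>y. wt_delta w \<delta> x y)"
    and "L2_Omega \<phi>"
    and "AE x in lebesgue. x \<in> {0<..<1} \<longrightarrow> Pt_delta w \<delta> \<phi> x \<ge> 0"
  shows "AE x in lebesgue. x \<in> {0<..<1} \<longrightarrow> \<phi> x \<ge> 0"
proof -
  interpret comparison_problem w \<delta> \<phi>
    using assms by unfold_locales auto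
  show ?thesis by (rule phi_nonneg_AE)
qed

end
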